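(* Let $q$ be a prime power and let $m>a\geq 0$, $n>b\geq 0$, $h\geq 0$ be integers with $h\leq (m-a)(n-b)-\max\{m-a,n-b\}$. Let $\mathcal{C}_{\mathsf{out}}\in\mathbb{C}^{\mathsf{MR}}_{m\times n}(a,b,0)$ be an $[mn,(m-a)(n-b)]$ code over $\mathbb{F}_q$ with generator matrix $\mathbf{G}_{\mathsf{out}}\in\mathbb{F}_q^{(m-a)(n-b)\times mn}$. Let $s\geq (m-a)(n-b)$, let $\mathbf{g}\in\mathbb{F}_{q^s}^{(m-a)(n-b)}$ have entries that are linearly independent over $\mathbb{F}_q$, and let $\mathbf{G}_{\mathsf{in}}$ be the generator matrix (as in the definition below) of the Gabidulin code $\mathcal{C}_{\mathsf{in}}=\mathsf{Gab}\big((m-a)(n-b),(m-a)(n-b)-h,\mathbf{g}\big)$ over $\mathbb{F}_{q^s}$. Then the code over $\mathbb{F}_{q^s}$ spanned by the rows of $\mathbf{G}_{\mathsf{in}}\cdot\mathbf{G}_{\mathsf{out}}$ corrects every erasure pattern in $$\{\mathcal{E}'\cup\mathcal{I}\ \mid\ \mathcal{E}'\in\mathbb{E}^{\max}_{m\times n}(a,b,0),\ \mathcal{I}\subset([m]\times[n])\setminus\mathcal{E}',\ |\mathcal{I}|=h\}.$$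
   Context: Positions of vectors in $\mathbb{F}^{mn}$ are identified with the grid $[m]\times[n]$, where $[k]=\{1,\dots,k\}$. For linear codes $\mathcal{C}_1\subseteq\mathbb{F}^m$, $\mathcal{C}_2\subseteq\mathbb{F}^n$ with generator matrices $\mathbf{G}_1,\mathbf{G}_2$, $\mathcal{C}_1\otimes\mathcal{C}_2$ is the row span of the Kronecker product $\mathbf{G}_1\otimes\mathbf{G}_2$ (the $m\times n$ arrays with all columns in $\mathcal{C}_1$ and all rows in $\mathcal{C}_2$). A code for the topology $T_{m\times n}(a,b,h)$ is a linear code over a finite field $\mathbb{F}$ with a parity-check matrix $\begin{pmatrix}\mathbf{H}_{\mathsf{local}}\\ \mathbf{H}_{\mathsf{global}}\end{pmatrix}$, where $\mathbf{H}_{\mathsf{local}}$ is a parity-check matrix of $\mathcal{C}_{\mathsf{col}}\otimes\mathcal{C}_{\mathsf{row}}$ for some linear $[m,\geq m-a]$ code $\mathcal{C}_{\mathsf{col}}$ and $[n,\geq n-b]$ code $\mathcal{C}_{\mathsf{row}}$ over $\mathbb{F}$, and $\mathbf{H}_{\mathsf{global}}$ is an arbitrary $h\times mn$ matrix over $\mathbb{F}$; $\mathbb{C}_{m\times n}(a,b,h)$ denotes the set of all such codes. A code corrects an erasure pattern $\mathcal{E}\subseteq[m]\times[n]$ if no two distinct codewords agree on all positions outside $\mathcal{E}$. $\mathcal{E}$ is correctable in $T_{m\times n}(a,b,h)$ if some code in $\mathbb{C}_{m\times n}(a,b,h)$ corrects it; $\mathbb{E}_{m\times n}(a,b,h)$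 is the set of such patterns and $\mathbb{E}^{\max}_{m\times n}(a,b,h)$ the set of those not properly contained in another correctable pattern. A code in $\mathbb{C}_{m\times n}(a,b,h)$ is maximally recoverable (MR) if it corrects every pattern in $\mathbb{E}_{m\times n}(a,b,h)$; $\mathbb{C}^{\mathsf{MR}}_{m\times n}(a,b,h)$ is the set of MR codes. Gabidulin code: for $\mathbf{g}=(g_1,\dots,g_N)\in\mathbb{F}_{q^s}^N$ with $g_i$ linearly independent over $\mathbb{F}_q$, $\mathsf{Gab}(N,k,\mathbf{g})$ is the $[N,k]$ code over $\mathbb{F}_{q^s}$ spanned by the rows of the $k\times N$ matrix whose $(i,j)$ entry is $g_j^{q^{i-1}}$. *)

theory Defs
  imports "HOL-Algebra.Algebra" "HOL-Computational_Algebra.Primes"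
begin

definition vecs :: "('a,'m) ring_scheme \<Rightarrow> 'p set \<Rightarrow> ('p \<Rightarrow> 'a) set" where
  "vecs R P = {v. (\<forall>p\<in>P. v p \<in> carrier R) \<and> (\<forall>p. p \<notin> P \<longrightarrow> v p = \<zero>\<^bsub>R\<^esub>)}"

definition span_rows :: "('a,'m) ring_scheme \<Rightarrow> 'p set \<Rightarrow> 'i set \<Rightarrow> ('i \<Rightarrow> 'p \<Rightarrow> 'a) \<Rightarrow> ('p \<Rightarrow> 'a) set" where
  "span_rows R P I vs = {v. \<exists>c. (\<forall>i\<in>I. c i \<in> carrier R) \<and>
      v = (\<lambda>p. if p \<in> P then (\<Oplus>\<^bsub>R\<^esub> i\<in>I. c i \<otimes>\<^bsub>R\<^esub> vs i p) else \<zero>\<^bsub>R\<^esub>)}"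

definition lin_indep_rows :: "('a,'m) ring_scheme \<Rightarrow> 'p set \<Rightarrow> 'i set \<Rightarrow> ('i \<Rightarrow> 'p \<Rightarrow> 'a) \<Rightarrow> bool" where
  "lin_indep_rows R P I vs \<longleftrightarrow> (\<forall>c. (\<forall>i\<in>I. c i \<in> carrier R) \<longrightarrow>
      (\<forall>p\<in>P. (\<Oplus>\<^bsub>R\<^esub> i\<in>I. c i \<otimes>\<^bsub>R\<^esub> vs i p) = \<zero>\<^bsub>R\<^esub>) \<longrightarrow> (\<forall>i\<in>I. c i = \<zero>\<^bsub>R\<^esub>))"

definition lin_code :: "('a,'m) ring_scheme \<Rightarrow> 'p set \<Rightarrow> ('p \<Rightarrow> 'a) set \<Rightarrow> bool" where
  "lin_code R P C \<longleftrightarrow> C \<subseteq> vecs R P \<and> (\<lambda>p. \<zero>\<^bsub>R\<^esub>) \<in> C \<and>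
     (\<forall>x\<in>C. \<forall>y\<in>C. (\<lambda>p. x p \<oplus>\<^bsub>R\<^esub> y p) \<in> C) \<and>
     (\<forall>c\<in>carrier R. \<forall>x\<in>C. (\<lambda>p. c \<otimes>\<^bsub>R\<^esub> x p) \<in> C)"

definition code_dim :: "('a,'m) ring_scheme \<Rightarrow> 'p set \<Rightarrow> ('p \<Rightarrow> 'a) set \<Rightarrow> nat \<Rightarrow> bool" where
  "code_dim R P C k \<longleftrightarrow> (\<exists>vs. (\<forall>i<k. vs i \<in> C) \<and> lin_indep_rows R P {..<k} vs \<and>
      C = span_rows R P {..<k} vs)"

definition grid :: "nat \<Rightarrow> nat \<Rightarrow> (nat \<times> nat) set" where
  "grid m n = {1..m} \<times> {1..n}"

definition tensor_code :: "('a,'m) ring_scheme \<Rightarrow> nat \<Rightarrow> nat \<Rightarrow> (nat \<Rightarrow> 'a) set \<Rightarrow> (nat \<Rightarrow> 'a) set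
    \<Rightarrow> (nat \<times> nat \<Rightarrow> 'a) set" where
  "tensor_code R m n Ccol Crow = {x \<in> vecs R (grid m n).
      (\<forall>j\<in>{1..n}. (\<lambda>i. if i \<in> {1..m} then x (i,j) else \<zero>\<^bsub>R\<^esub>) \<in> Ccol) \<and>
      (\<forall>i\<in>{1..m}. (\<lambda>j. if j \<in> {1..n} then x (i,j) else \<zero>\<^bsub>R\<^esub>) \<in> Crow)}"

text \<open>Codes for the topology T_{m x n}(a,b,h) over the field R: the kernel of
  (H_local; H_global), where ker H_local = Ccol (x) Crow.\<close>
definition topo_code :: "('a,'m) ring_scheme \<Rightarrow> nat \<Rightarrow> nat \<Rightarrow> nat \<Rightarrow> nat \<Rightarrow> nat
    \<Rightarrow> (nat \<times> nat \<Rightarrow> 'a) set \<Rightarrow> bool" where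
  "topo_code R m n a b h C \<longleftrightarrow> (\<exists>Ccol Crow H.
      lin_code R {1..m} Ccol \<and> (\<exists>k. k \<ge> m - a \<and> code_dim R {1..m} Ccol k) \<and>
      lin_code R {1..n} Crow \<and> (\<exists>k. k \<ge> n - b \<and> code_dim R {1..n} Crow k) \<and>
      (\<forall>i\<in>{1..h}. \<forall>p\<in>grid m n. H i p \<in> carrier R) \<and>
      C = {x \<in> tensor_code R m n Ccol Crow.
             \<forall>i\<in>{1..h}. (\<Oplus>\<^bsub>R\<^esub> p\<in>grid m n. H i p \<otimes>\<^bsub>R\<^esub> x p) = \<zero>\<^bsub>R\<^esub>})"

definition corrects :: "nat \<Rightarrow> nat \<Rightarrow> (nat \<times> nat \<Rightarrow> 'a) set \<Rightarrow> (nat \<times> nat) set \<Rightarrow> bool" where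
  "corrects m n C E \<longleftrightarrow> (\<forall>x\<in>C. \<forall>y\<in>C. (\<forall>p\<in>grid m n - E. x p = y p) \<longrightarrow> x = y)"

text \<open>Correctable patterns: correctable by some code for the topology over some
  finite field (every finite field is isomorphic to one with carrier in nat).\<close>
definition correctable :: "nat \<Rightarrow> nat \<Rightarrow> nat \<Rightarrow> nat \<Rightarrow> nat \<Rightarrow> (nat \<times> nat) set \<Rightarrow> bool" where
  "correctable m n a b h E \<longleftrightarrow> E \<subseteq> grid m n \<and>
     (\<exists>(F :: nat ring) C. field F \<and> finite (carrier F) \<and> topo_code F m n a b h C \<and> corrects m n C E)"

definition max_correctable :: "nat \<Rightarrow> nat \<Rightarrow> nat \<Rightarrow> nat \<Rightarrow> nat \<Rightarrow> (nat \<times> nat) set \<Rightarrow> bool" where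
  "max_correctable m n a b h E \<longleftrightarrow> correctable m n a b h E \<and>
     (\<forall>E'. correctable m n a b h E' \<longrightarrow> \<not> E \<subset> E')"

definition MR_code :: "('a,'m) ring_scheme \<Rightarrow> nat \<Rightarrow> nat \<Rightarrow> nat \<Rightarrow> nat \<Rightarrow> nat
    \<Rightarrow> (nat \<times> nat \<Rightarrow> 'a) set \<Rightarrow> bool" where
  "MR_code R m n a b h C \<longleftrightarrow> topo_code R m n a b h C \<and>
     (\<forall>E. correctable m n a b h E \<longrightarrow> corrects m n C E)"

definition gab_gen :: "('a,'m) ring_scheme \<Rightarrow> nat \<Rightarrow> (nat \<Rightarrow> 'a) \<Rightarrow> nat \<Rightarrow> nat \<Rightarrow> 'a" where
  "gab_gen L q g i j = g j [^]\<^bsub>L\<^esub> (q ^ (i - 1))"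

definition mat_mult :: "('a,'m) ring_scheme \<Rightarrow> 'j set \<Rightarrow> ('i \<Rightarrow> 'j \<Rightarrow> 'a) \<Rightarrow> ('j \<Rightarrow> 'p \<Rightarrow> 'a)
    \<Rightarrow> 'i \<Rightarrow> 'p \<Rightarrow> 'a" where
  "mat_mult R J A B i p = (\<Oplus>\<^bsub>R\<^esub> j\<in>J. A i j \<otimes>\<^bsub>R\<^esub> B j p)"

end

(*
  Write N = (m - a)(n - b) and T = ([m] x [n]) - E'.  Since C_out corrects E', its (independent)
  generator rows remain independent when restricted to the positions in T.

  Put phi(u) = sum_j u_j g_j; it embeds F_q^N into F_{q^s} F_q-linearly.  Because g_j^(q^e) is the
  Frobenius image of g_j and the entries of G_out lie in F_q, the entry of G_in G_out at row i and
  position p is phi(col_p)^(q^(i-1)), col_p being the p-th column of G_out.  Hence the codeword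
  with coefficient vector c reads f(phi(col_p)) at p, where f(x) = sum_i c_i x^(q^(i-1)) is a
  q-linearized polynomial, again F_q-linear by the Frobenius.

  Suppose that codeword vanishes outside E' u I with c <> 0.  The vectors u with f(phi(u)) = 0
  form an F_q-subspace U of size at most deg f <= q^(N-h-1), and it contains col_p for every
  p in T - I.  So all columns indexed by T lie in the span of a basis of U and the h columns
  indexed by I: fewer than N vectors.  Some nonzero d in F_q^N is then orthogonal to all of them,
  i.e. d G_out vanishes on T, contradicting the independence of the rows of G_out on T.
*)
theory Submission
  imports Defs
begin

context cring
begin

lemma binomial_term_Suc:
  assumes x: "x \<in> carrier R" and y: "y \<in> carrier R"
  shows "add_pow R (Suc n choose Suc i) (x [^] Suc i \<otimes> y [^] (Suc n - Suc i)) =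
      x \<otimes> add_pow R (n choose i) (x [^] i \<otimes> y [^] (n - i)) \<oplus>
      y \<otimes> add_pow R (n choose Suc i) (x [^] Suc i \<otimes> y [^] (n - Suc i))"
proof (cases "i < n")
  case True
  then have "y [^] (n - i) = y \<otimes> y [^] (n - Suc i)"
    using y by (metis Suc_diff_Suc nat_pow_Suc2)
  then show ?thesis
    using x y by (simp add: add.nat_pow_mult add_pow_rdistr m_lcomm nat_pow_Suc2 m_assoc)
next
  case False
  then have "n choose Suc i = 0" "Suc n choose Suc i = n choose i" by simp_all
  then show ?thesis using x y
    by (simp del: binomial_eq_0_iff binomial_Suc_Suc add: add_pow_rdistr m_ac)
qed

theorem binomial:
  assumes x: "x \<in> carrier R" and y: "y \<in> carrier R"
  shows "(x \<oplus> y) [^] n = (\<Oplus> i\<in>{..n}. add_pow R (n choose i) (x [^] i \<otimes> y [^] (n - i)))"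
proof (induction n)
  case 0
  show ?case using x y by simp
next
  case (Suc n)
  define t where "t n i = add_pow R (n choose i) (x [^] i \<otimes> y [^] (n - i))" for n i
  have t_closed: "t n i \<in> carrier R" for n i
    unfolding t_def using x y by simp
  have "(\<Oplus> i\<in>{..Suc n}. t (Suc n) i) = (\<Oplus> i\<in>{..n}. t (Suc n) (Suc i)) \<oplus> t (Suc n) 0"
    using t_closed by (intro finsum_Suc2) auto
  also have "\<dots> = (\<Oplus> i\<in>{..n}. x \<otimes> t n i \<oplus> y \<otimes> t n (Suc i)) \<oplus> y \<otimes> t n 0"
    using binomial_term_Suc[OF x y] y by (simp add: t_def nat_pow_Suc2 m_comm del: binomial_Suc_Suc)
  also have "\<dots> = x \<otimes> (\<Oplus> i\<in>{..n}. t n i) \<oplus> y \<otimes> ((\<Oplus> i\<in>{..n}. t n (Suc i)) \<oplus> t n 0)"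
    using x y t_closed by (simp add: finsum_rdistr r_distr a_assoc)
  also have "(\<Oplus> i\<in>{..n}. t n (Suc i)) \<oplus> t n 0 = (\<Oplus> i\<in>{..n}. t n i)"
  proof -
    have "(\<Oplus> i\<in>{..n}. t n (Suc i)) \<oplus> t n 0 = (\<Oplus> i\<in>{..Suc n}. t n i)"
      using t_closed by (intro finsum_Suc2[symmetric]) auto
    also have "\<dots> = (\<Oplus> i\<in>{..n}. t n i)"
      using t_closed by (simp add: t_def binomial_eq_0)
    finally show ?thesis .
  qed
  finally show ?case
    using x y t_closed by (simp add: Suc[folded t_def] l_distr[symmetric] m_comm t_def)
qed

lemma add_pow_char_dvd:
  fixes p k :: nat
  assumes char: "add_pow R p \<one> = \<zero>" and "p dvd k" and z: "z \<in> carrier R"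
  shows "add_pow R k z = \<zero>"
proof -
  obtain t where k: "k = p * t" using \<open>p dvd k\<close> by blast
  have "add_pow R p z = add_pow R p \<one> \<otimes> z"
    using add_pow_ldistr[OF one_closed z, of p] z by simp
  then show ?thesis
    using char z by (simp add: k add.nat_pow_pow[symmetric])
qed

lemma frobenius_add:
  fixes p :: nat
  assumes p: "Factorial_Ring.prime p" and char: "add_pow R p \<one> = \<zero>"
    and x: "x \<in> carrier R" and y: "y \<in> carrier R"
  shows "(x \<oplus> y) [^] p = x [^] p \<oplus> y [^] p"
proof -
  define f where "f i = add_pow R (p choose i) (x [^] i \<otimes> y [^] (p - i))" for i
  have f_closed: "f i \<in> carrier R" for i
    unfolding f_def using x y by simp
  have "0 < p" using p prime_gt_0_nat by blast
  then have range: "{..p} = insert p (insert 0 {1..<p})" by auto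
  have "f i = \<zero>" if "i \<in> {1..<p}" for i
    unfolding f_def using that p x y by (intro add_pow_char_dvd[OF char] dvd_choose_prime) auto
  then have "(\<Oplus> i\<in>{1..<p}. f i) = (\<Oplus> i\<in>{1..<p}. \<zero>)"
    by (intro finsum_cong') auto
  then have "(\<Oplus> i\<in>{1..<p}. f i) = \<zero>"
    by simp
  moreover have "(x \<oplus> y) [^] p = f p \<oplus> (f 0 \<oplus> (\<Oplus> i\<in>{1..<p}. f i))"
    unfolding binomial[OF x y] f_def[symmetric] range using \<open>0 < p\<close>
    by (simp add: f_closed Pi_def)
  ultimately show ?thesis
    using x y \<open>0 < p\<close> by (simp add: f_def)
qed

lemma frobenius_power_add:
  fixes p :: nat
  assumes p: "Factorial_Ring.prime p" and char: "add_pow R p \<one> = \<zero>"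
    and x: "x \<in> carrier R" and y: "y \<in> carrier R"
  shows "(x \<oplus> y) [^] (p ^ e) = x [^] (p ^ e) \<oplus> y [^] (p ^ e)"
proof (induction e)
  case (Suc e)
  have "(x \<oplus> y) [^] (p ^ Suc e) = ((x \<oplus> y) [^] (p ^ e)) [^] p"
    using x y by (simp add: nat_pow_pow mult.commute)
  also have "\<dots> = (x [^] (p ^ e)) [^] p \<oplus> (y [^] (p ^ e)) [^] p"
    using Suc x y by (simp add: frobenius_add[OF p char])
  finally show ?case
    using x y by (simp add: nat_pow_pow mult.commute)
qed (use x y in simp)

end

lemma (in domain) add_pow_one_eq_zero_of_power:
  fixes p k :: nat
  assumes "add_pow R (p ^ k) \<one> = \<zero>"
  shows "add_pow R p \<one> = \<zero>"
proof -
  have "add_pow R (p ^ j) \<one> = add_pow R p \<one> [^] j" for j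
  proof (induction j)
    case (Suc j)
    have "add_pow R (p ^ Suc j) \<one> = add_pow R (p ^ j) \<one> \<otimes> add_pow R p \<one>"
      using add_pow_ldistr[OF one_closed add.nat_pow_closed[OF one_closed], of "p ^ j" p]
      by (simp add: add.nat_pow_pow mult.commute)
    then show ?case using Suc by simp
  qed simp
  moreover have "a [^] k = \<zero> \<Longrightarrow> a = \<zero>" if "a \<in> carrier R" for a :: 'a
    using that by (induction k) (auto simp: integral_iff)
  ultimately show ?thesis using assms by simp
qed

lemma (in domain) card_roots_sparse_poly_le:
  assumes fin: "finite (carrier R)" and A: "finite A" and e: "inj_on e A"
    and c: "c \<in> A \<rightarrow> carrier R" and i: "i \<in> A" "c i \<noteq> \<zero>"
  shows "card {x \<in> carrier R. (\<Oplus> j\<in>A. c j \<otimes> x [^] e j) = \<zero>} \<le> Max (e ` A)"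
proof -
  interpret UP: UP_domain R "UP R" by unfold_locales
  interpret ev: UP_pre_univ_prop R R id "UP R" by unfold_locales simp
  have c_closed: "c j \<in> carrier R" if "j \<in> A" for j
    using c that by blast
  define f where "f = (\<Oplus>\<^bsub>UP R\<^esub> j\<in>A. UnivPoly.monom (UP R) (c j) (e j))"
  have f_closed: "f \<in> carrier (UP R)"
    unfolding f_def by (auto intro!: UP.P.finsum_closed simp: c_closed)
  have coeff_f: "UnivPoly.coeff (UP R) f n = (\<Oplus> j\<in>A. if e j = n then c j else \<zero>)" for n
    unfolding f_def using A by (subst UP.coeff_finsum) (auto intro!: finsum_cong' simp: c_closed)
  have "UnivPoly.coeff (UP R) f (e i) = c i"
    unfolding coeff_f using A c i e
    by (subst finsum_cong'[where g = "\<lambda>j. if i = j then c j else \<zero>"])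
       (auto simp: inj_on_eq_iff finsum_singleton)
  then have f_nonzero: "f \<noteq> \<zero>\<^bsub>UP R\<^esub>"
    using i by auto
  have "deg R f \<le> Max (e ` A)"
  proof (rule UP.deg_aboveI[OF _ f_closed])
    fix n assume "Max (e ` A) < n"
    then have "e j \<noteq> n" if "j \<in> A" for j
      using that A by (metis Max_ge finite_imageI image_eqI leD)
    then have "(\<Oplus> j\<in>A. if e j = n then c j else \<zero>) = (\<Oplus> j\<in>A. \<zero>)"
      by (intro finsum_cong') auto
    then show "UnivPoly.coeff (UP R) f n = \<zero>"
      unfolding coeff_f by simp
  qed
  moreover have eval_f: "UnivPoly.eval R R id x f = (\<Oplus> j\<in>A. c j \<otimes> x [^] e j)"
    if "x \<in> carrier R" for x
  proof -
    interpret hom: ring_hom_ring "UP R" R "UnivPoly.eval R R id x"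
      using ev.eval_ring_hom[OF that] by unfold_locales
    have "UnivPoly.eval R R id x f = (\<Oplus> j\<in>A. UnivPoly.eval R R id x (UnivPoly.monom (UP R) (c j) (e j)))"
      unfolding f_def by (subst hom.hom_finsum) (auto simp: c_closed comp_def)
    then show ?thesis
      using that by (auto simp: ev.eval_monom c_closed intro!: finsum_cong')
  qed
  moreover have "{x \<in> carrier R. UnivPoly.eval R R id x f = \<zero>} =
      {x \<in> carrier R. (\<Oplus> j\<in>A. c j \<otimes> x [^] e j) = \<zero>}"
    using eval_f by auto
  ultimately show ?thesis
    using UP.roots_bound[OF f_closed f_nonzero fin] by simp
qed

lemma (in field) pow_order_eq_self:
  assumes "finite (carrier R)" and a: "a \<in> carrier R"
  shows "a [^] order R = a"
proof (cases "a = \<zero>")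
  case False
  then have "a \<in> Units R" using a field_Units by simp
  then have "a [^] (order R - 1) = \<one>"
    using units_power_order_eq_one assms by (simp add: field_Units order_def)
  moreover have "order R > 0"
    unfolding order_def using a assms(1) card_gt_0_iff by blast
  ultimately show ?thesis
    using a by (metis Suc_diff_1 l_one nat_pow_Suc)
next
  case True
  have "order R \<noteq> 0"
    using assms(1) one_closed by (auto simp: order_def card_eq_0_iff)
  then show ?thesis using True by (simp add: nat_pow_zero)
qed

context ring
begin

lemma vecs_closed: "v \<in> vecs R P \<Longrightarrow> v p \<in> carrier R"
  unfolding vecs_def by (cases "p \<in> P") auto

lemma lin_code_vecs: "lin_code R P (vecs R P)"
  unfolding lin_code_def vecs_def by auto

lemma finsum_diff_ldistr:
  assumes "c \<in> I \<rightarrow> carrier R" "d \<in> I \<rightarrow> carrier R" "y \<in> I \<rightarrow> carrier R"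
  shows "(\<Oplus> i\<in>I. (c i \<ominus> d i) \<otimes> y i) = (\<Oplus> i\<in>I. c i \<otimes> y i) \<ominus> (\<Oplus> i\<in>I. d i \<otimes> y i)"
proof -
  have "(\<Oplus> i\<in>I. (c i \<ominus> d i) \<otimes> y i) \<oplus> (\<Oplus> i\<in>I. d i \<otimes> y i)
      = (\<Oplus> i\<in>I. (c i \<ominus> d i) \<otimes> y i \<oplus> d i \<otimes> y i)"
    using assms by (intro finsum_addf[symmetric]) auto
  also have "\<dots> = (\<Oplus> i\<in>I. c i \<otimes> y i)"
  proof (intro finsum_cong')
    fix i assume "i \<in> I"
    then have "c i \<in> carrier R" "d i \<in> carrier R" "y i \<in> carrier R"
      using assms by auto
    then show "(c i \<ominus> d i) \<otimes> y i \<oplus> d i \<otimes> y i = c i \<otimes> y i"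
      by algebra
  qed (use assms in auto)
  finally have "(\<Oplus> i\<in>I. (c i \<ominus> d i) \<otimes> y i) \<oplus> (\<Oplus> i\<in>I. d i \<otimes> y i) = (\<Oplus> i\<in>I. c i \<otimes> y i)" .
  moreover have "(\<Oplus> i\<in>I. (c i \<ominus> d i) \<otimes> y i) \<in> carrier R" "(\<Oplus> i\<in>I. d i \<otimes> y i) \<in> carrier R"
    using assms by (auto intro!: finsum_closed)
  moreover have "a = (a \<oplus> b) \<ominus> b" if "a \<in> carrier R" "b \<in> carrier R" for a b
    using that by algebra
  ultimately show ?thesis
    by metis
qed

lemma card_vecs:
  fixes P :: "'p set"
  assumes "finite P"
  shows "card (vecs R P) = card (carrier R) ^ card P"
proof -
  define ext where "ext f = (\<lambda>p. if p \<in> P then f p else \<zero>)" for f :: "'p \<Rightarrow> 'a"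
  have "vecs R P = ext ` (P \<rightarrow>\<^sub>E carrier R)"
  proof (intro equalityI subsetI)
    fix v assume "v \<in> vecs R P"
    then have "v = ext (restrict v P)" "restrict v P \<in> P \<rightarrow>\<^sub>E carrier R"
      unfolding ext_def vecs_def by auto
    then show "v \<in> ext ` (P \<rightarrow>\<^sub>E carrier R)" by blast
  next
    fix v assume "v \<in> ext ` (P \<rightarrow>\<^sub>E carrier R)"
    then show "v \<in> vecs R P"
      unfolding ext_def vecs_def by auto
  qed
  moreover have "inj_on ext (P \<rightarrow>\<^sub>E carrier R)"
  proof (rule inj_onI)
    fix f g assume f: "f \<in> P \<rightarrow>\<^sub>E carrier R" and g: "g \<in> P \<rightarrow>\<^sub>E carrier R" and "ext f = ext g"
    then have "f p = g p" if "p \<in> P" for p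
      using that unfolding ext_def by (metis (full_types))
    then show "f = g" using f g by (intro PiE_ext) auto
  qed
  ultimately show ?thesis
    using assms by (simp add: card_image card_PiE)
qed

lemma span_rows_subset:
  assumes W: "lin_code R P W" and I: "finite I" and Y: "\<forall>i\<in>I. Y i \<in> W"
  shows "span_rows R P I Y \<subseteq> W"
proof -
  have WV: "W \<subseteq> vecs R P" using W unfolding lin_code_def by (rule conjunct1)
  have "(\<lambda>p. if p \<in> P then (\<Oplus> i\<in>I. c i \<otimes> Y i p) else \<zero>) \<in> W" if "\<forall>i\<in>I. c i \<in> carrier R" for c
    using I Y that
  proof (induction I rule: finite_induct)
    case empty
    then show ?case using W unfolding lin_code_def by (simp cong: if_cong)
  next
    case (insert a I)
    let ?v = "\<lambda>p. if p \<in> P then (\<Oplus> i\<in>I. c i \<otimes> Y i p) else \<zero>"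
    have Y_closed: "Y i p \<in> carrier R" if "i \<in> insert a I" for i p
      using insert.prems(1) WV that by (intro vecs_closed) auto
    have split: "(if p \<in> P then (\<Oplus> i\<in>insert a I. c i \<otimes> Y i p) else \<zero>) = c a \<otimes> Y a p \<oplus> ?v p" for p
    proof (cases "p \<in> P")
      case True
      then show ?thesis
        using insert.hyps insert.prems(2) Y_closed by (simp add: Pi_iff)
    next
      case False
      then have "Y a p = \<zero>" using insert.prems(1) WV unfolding vecs_def by auto
      then show ?thesis using False insert.prems(2) by simp
    qed
    have "(\<lambda>p. c a \<otimes> Y a p) \<in> W" "?v \<in> W"
      using W insert unfolding lin_code_def by auto
    then have "(\<lambda>p. c a \<otimes> Y a p \<oplus> ?v p) \<in> W"
      using W unfolding lin_code_def by fast
    then show ?case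
      by (simp only: split)
  qed
  then show ?thesis unfolding span_rows_def by blast
qed

lemma card_span_rows:
  assumes I: "finite I" and indep: "lin_indep_rows R P I Y"
    and Y: "\<forall>i\<in>I. \<forall>p\<in>P. Y i p \<in> carrier R"
  shows "card (span_rows R P I Y) = card (carrier R) ^ card I"
proof -
  define comb where "comb c = (\<lambda>p. if p \<in> P then (\<Oplus> i\<in>I. c i \<otimes> Y i p) else \<zero>)" for c
  have "span_rows R P I Y = comb ` (I \<rightarrow>\<^sub>E carrier R)"
  proof (intro equalityI subsetI)
    fix v assume "v \<in> span_rows R P I Y"
    then obtain c where c: "\<forall>i\<in>I. c i \<in> carrier R" "v = comb c"
      unfolding span_rows_def comb_def by blast
    then have "v = comb (restrict c I)"
      unfolding comb_def using Y by (auto simp: fun_eq_iff intro!: finsum_cong')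
    then show "v \<in> comb ` (I \<rightarrow>\<^sub>E carrier R)" using c(1) by auto
  qed (auto simp: span_rows_def comb_def)
  moreover have "inj_on comb (I \<rightarrow>\<^sub>E carrier R)"
  proof (rule inj_onI)
    fix c d assume c: "c \<in> I \<rightarrow>\<^sub>E carrier R" and d: "d \<in> I \<rightarrow>\<^sub>E carrier R" and "comb c = comb d"
    have "(\<Oplus> i\<in>I. c i \<otimes> Y i p) = (\<Oplus> i\<in>I. d i \<otimes> Y i p)" if "p \<in> P" for p
      using fun_cong[OF \<open>comb c = comb d\<close>, of p] that unfolding comb_def by simp
    then have "(\<Oplus> i\<in>I. (c i \<ominus> d i) \<otimes> Y i p) = \<zero>" if "p \<in> P" for p
      using that c d Y by (simp add: finsum_diff_ldistr PiE_iff Pi_iff)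
    then have "c i \<ominus> d i = \<zero>" if "i \<in> I" for i
      using that c d indep[unfolded lin_indep_rows_def, rule_format, of "\<lambda>i. c i \<ominus> d i"]
      by (auto simp: PiE_iff)
    then show "c = d"
      using c d by (intro PiE_ext) (auto simp: PiE_iff)
  qed
  ultimately show ?thesis
    using I by (simp add: card_image card_PiE)
qed

lemma finsum_fun_upd_lessThan_Suc:
  assumes "c \<in> {..<Suc r} \<rightarrow> carrier R" "\<forall>i<r. Y i p \<in> carrier R" "x p \<in> carrier R"
  shows "(\<Oplus> i\<in>{..<Suc r}. c i \<otimes> (Y(r := x)) i p) = c r \<otimes> x p \<oplus> (\<Oplus> i\<in>{..<r}. c i \<otimes> Y i p)"
proof -
  have "(\<Oplus> i\<in>{..<Suc r}. c i \<otimes> (Y(r := x)) i p) = c r \<otimes> x p \<oplus> (\<Oplus> i\<in>{..<r}. c i \<otimes> (Y(r := x)) i p)"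
    unfolding lessThan_Suc using assms by (subst finsum_insert) (auto simp: Pi_iff)
  also have "(\<Oplus> i\<in>{..<r}. c i \<otimes> (Y(r := x)) i p) = (\<Oplus> i\<in>{..<r}. c i \<otimes> Y i p)"
    using assms by (intro finsum_cong') (auto simp: Pi_iff)
  finally show ?thesis .
qed

lemma span_rows_subset_fun_upd:
  assumes Y: "\<forall>i<r. Y i \<in> vecs R P" and x: "x \<in> vecs R P"
  shows "span_rows R P {..<r} Y \<subseteq> span_rows R P {..<Suc r} (Y(r := x))"
proof
  fix v assume "v \<in> span_rows R P {..<r} Y"
  then obtain c where c: "\<forall>i\<in>{..<r}. c i \<in> carrier R"
    and v: "v = (\<lambda>p. if p \<in> P then (\<Oplus> i\<in>{..<r}. c i \<otimes> Y i p) else \<zero>)"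
    unfolding span_rows_def by blast
  define c' where "c' = c(r := \<zero>)"
  have c': "\<forall>i\<in>{..<Suc r}. c' i \<in> carrier R" using c by (auto simp: c'_def)
  have "(\<Oplus> i\<in>{..<Suc r}. c' i \<otimes> (Y(r := x)) i p) = (\<Oplus> i\<in>{..<r}. c i \<otimes> Y i p)" for p
  proof -
    have "(\<Oplus> i\<in>{..<r}. c' i \<otimes> Y i p) = (\<Oplus> i\<in>{..<r}. c i \<otimes> Y i p)"
      by (intro finsum_cong') (use c Y in \<open>auto simp: c'_def vecs_closed\<close>)
    moreover have "(\<Oplus> i\<in>{..<r}. c i \<otimes> Y i p) \<in> carrier R"
      using c Y by (auto intro!: finsum_closed simp: vecs_closed)
    moreover have "\<forall>i<r. Y i p \<in> carrier R" "x p \<in> carrier R"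
      by (simp_all add: Y[rule_format, THEN vecs_closed] x[THEN vecs_closed])
    ultimately show ?thesis
      using finsum_fun_upd_lessThan_Suc[of c' r Y p x] c' by (simp add: c'_def)
  qed
  then show "v \<in> span_rows R P {..<Suc r} (Y(r := x))"
    unfolding v span_rows_def using c' by (auto intro!: exI[of _ c'])
qed

lemma fun_upd_in_span_rows:
  assumes Y: "\<forall>i<r. Y i \<in> vecs R P" and x: "x \<in> vecs R P"
  shows "x \<in> span_rows R P {..<Suc r} (Y(r := x))"
proof -
  define c where "c i = (if i = r then \<one> else \<zero>)" for i
  have c: "\<forall>i\<in>{..<Suc r}. c i \<in> carrier R" unfolding c_def by simp
  have "(\<Oplus> i\<in>{..<r}. c i \<otimes> Y i p) = (\<Oplus> i\<in>{..<r}. \<zero>)" for p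
    unfolding c_def using Y by (intro finsum_cong') (auto simp: vecs_closed)
  moreover have "\<forall>i<r. Y i p \<in> carrier R" "x p \<in> carrier R" for p
    by (simp_all add: Y[rule_format, THEN vecs_closed] x[THEN vecs_closed])
  ultimately have "x p = (if p \<in> P then (\<Oplus> i\<in>{..<Suc r}. c i \<otimes> (Y(r := x)) i p) else \<zero>)" for p
    using finsum_fun_upd_lessThan_Suc[of c r Y p x] c x unfolding vecs_def by (simp add: c_def)
  then have "x = (\<lambda>p. if p \<in> P then (\<Oplus> i\<in>{..<Suc r}. c i \<otimes> (Y(r := x)) i p) else \<zero>)"
    by (rule ext)
  then show ?thesis
    unfolding span_rows_def using c by blast
qed

end

lemma (in cring) lin_code_orthogonal:
  assumes P: "finite P" and e: "e \<in> vecs R P"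
  shows "lin_code R P {v \<in> vecs R P. (\<Oplus> p\<in>P. e p \<otimes> v p) = \<zero>}"
  unfolding lin_code_def
proof (intro conjI ballI)
  have "(\<Oplus> p\<in>P. e p \<otimes> \<zero>) = (\<Oplus> p\<in>P. \<zero>)"
    using e by (intro finsum_cong') (auto simp: vecs_closed)
  then show "(\<lambda>p. \<zero>) \<in> {v \<in> vecs R P. (\<Oplus> p\<in>P. e p \<otimes> v p) = \<zero>}"
    by (simp add: vecs_def)
next
  fix x y assume x: "x \<in> {v \<in> vecs R P. (\<Oplus> p\<in>P. e p \<otimes> v p) = \<zero>}"
    and y: "y \<in> {v \<in> vecs R P. (\<Oplus> p\<in>P. e p \<otimes> v p) = \<zero>}"
  have "(\<Oplus> p\<in>P. e p \<otimes> (x p \<oplus> y p)) = (\<Oplus> p\<in>P. e p \<otimes> x p \<oplus> e p \<otimes> y p)"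
    using e x y by (intro finsum_cong') (auto simp: r_distr vecs_closed)
  also have "\<dots> = (\<Oplus> p\<in>P. e p \<otimes> x p) \<oplus> (\<Oplus> p\<in>P. e p \<otimes> y p)"
    using e x y by (intro finsum_addf) (auto simp: vecs_closed)
  finally have "(\<Oplus> p\<in>P. e p \<otimes> (x p \<oplus> y p)) = (\<Oplus> p\<in>P. e p \<otimes> x p) \<oplus> (\<Oplus> p\<in>P. e p \<otimes> y p)" .
  then show "(\<lambda>p. x p \<oplus> y p) \<in> {v \<in> vecs R P. (\<Oplus> p\<in>P. e p \<otimes> v p) = \<zero>}"
    using lin_code_vecs[of P] x y unfolding lin_code_def by simp
next
  fix c x assume c: "c \<in> carrier R" and x: "x \<in> {v \<in> vecs R P. (\<Oplus> p\<in>P. e p \<otimes> v p) = \<zero>}"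
  have "(\<Oplus> p\<in>P. e p \<otimes> (c \<otimes> x p)) = (\<Oplus> p\<in>P. c \<otimes> (e p \<otimes> x p))"
    using e x c by (intro finsum_cong') (auto simp: m_lcomm vecs_closed)
  also have "\<dots> = c \<otimes> (\<Oplus> p\<in>P. e p \<otimes> x p)"
    using P e x c by (intro finsum_rdistr[symmetric]) (auto simp: vecs_closed)
  finally have "(\<Oplus> p\<in>P. e p \<otimes> (c \<otimes> x p)) = c \<otimes> (\<Oplus> p\<in>P. e p \<otimes> x p)" .
  then show "(\<lambda>p. c \<otimes> x p) \<in> {v \<in> vecs R P. (\<Oplus> p\<in>P. e p \<otimes> v p) = \<zero>}"
    using lin_code_vecs[of P] x c unfolding lin_code_def by simp
qed auto

context field
begin

lemma card_carrier_ge_2: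
  assumes "finite (carrier R)" shows "card (carrier R) \<ge> 2"
proof -
  have "card {\<zero>, \<one>} \<le> card (carrier R)"
    by (intro card_mono assms) auto
  then show ?thesis
    using zero_not_one by simp
qed

lemma in_span_rows_of_relation:
  fixes r :: nat
  assumes Y: "\<forall>i<r. Y i \<in> vecs R P" and x: "x \<in> vecs R P"
    and a: "a \<in> carrier R" "a \<noteq> \<zero>" and c: "\<forall>i\<in>{..<r}. c i \<in> carrier R"
    and rel: "\<forall>p\<in>P. a \<otimes> x p \<oplus> (\<Oplus> i\<in>{..<r}. c i \<otimes> Y i p) = \<zero>"
  shows "x \<in> span_rows R P {..<r} Y"
proof -
  have a_inv: "inv a \<in> carrier R" "inv a \<otimes> a = \<one>"
    using a by (auto simp: field_Units)
  define d where "d i = (\<ominus> (inv a)) \<otimes> c i" for i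
  have "x p = (if p \<in> P then (\<Oplus> i\<in>{..<r}. d i \<otimes> Y i p) else \<zero>)" for p
  proof (cases "p \<in> P")
    case True
    have S_closed: "(\<Oplus> i\<in>{..<r}. c i \<otimes> Y i p) \<in> carrier R"
      using c Y by (auto intro!: finsum_closed simp: vecs_closed)
    have "(\<Oplus> i\<in>{..<r}. d i \<otimes> Y i p) = (\<ominus> (inv a)) \<otimes> (\<Oplus> i\<in>{..<r}. c i \<otimes> Y i p)"
      unfolding d_def using c Y a_inv
      by (subst finsum_rdistr) (auto simp: m_assoc vecs_closed intro!: finsum_cong')
    also have "(\<Oplus> i\<in>{..<r}. c i \<otimes> Y i p) = \<ominus> (a \<otimes> x p)"
      using rel True S_closed a x by (intro minus_equality[symmetric]) (auto simp: add.m_comm vecs_closed)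
    also have "(\<ominus> (inv a)) \<otimes> \<ominus> (a \<otimes> x p) = x p"
      using a_inv a x by (simp add: l_minus r_minus m_assoc[symmetric] vecs_closed)
    finally show ?thesis using True by simp
  next
    case False
    then show ?thesis using x unfolding vecs_def by simp
  qed
  moreover have "\<forall>i\<in>{..<r}. d i \<in> carrier R"
    unfolding d_def using c a_inv by simp
  ultimately show ?thesis
    unfolding span_rows_def by blast
qed

lemma lin_indep_rows_extend:
  assumes indep: "lin_indep_rows R P {..<r} Y" and Y: "\<forall>i<r. Y i \<in> vecs R P"
    and x: "x \<in> vecs R P" and x_notin: "x \<notin> span_rows R P {..<r} Y"
  shows "lin_indep_rows R P {..<Suc r} (Y(r := x))"
  unfolding lin_indep_rows_def
proof (intro allI impI)
  fix c assume c: "\<forall>i\<in>{..<Suc r}. c i \<in> carrier R"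
    and zero: "\<forall>p\<in>P. (\<Oplus> i\<in>{..<Suc r}. c i \<otimes> (Y(r := x)) i p) = \<zero>"
  define S where "S p = (\<Oplus> i\<in>{..<r}. c i \<otimes> Y i p)" for p
  have S_closed: "S p \<in> carrier R" for p
    unfolding S_def using c Y by (auto intro!: finsum_closed simp: vecs_closed)
  have rel: "\<forall>p\<in>P. c r \<otimes> x p \<oplus> S p = \<zero>"
  proof
    fix p assume "p \<in> P"
    have "(\<Oplus> i\<in>{..<Suc r}. c i \<otimes> (Y(r := x)) i p) = c r \<otimes> x p \<oplus> S p"
      unfolding S_def using c Y x by (intro finsum_fun_upd_lessThan_Suc) (auto simp: vecs_closed)
    then show "c r \<otimes> x p \<oplus> S p = \<zero>" using zero \<open>p \<in> P\<close> by simp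
  qed
  have "c r = \<zero>"
  proof (rule ccontr)
    assume "c r \<noteq> \<zero>"
    then have "x \<in> span_rows R P {..<r} Y"
      using in_span_rows_of_relation[OF Y x _ _ _ rel[unfolded S_def]] c by simp
    then show False using x_notin by contradiction
  qed
  then have "\<forall>p\<in>P. S p = \<zero>"
    using rel x S_closed by (simp add: vecs_closed)
  then have "\<forall>i\<in>{..<r}. c i = \<zero>"
    using indep c unfolding lin_indep_rows_def S_def by simp
  then show "\<forall>i\<in>{..<Suc r}. c i = \<zero>"
    using \<open>c r = \<zero>\<close> by (auto simp: less_Suc_eq)
qed

lemma exists_independent_spanning:
  assumes W: "lin_code R P W" and S: "finite S" "S \<subseteq> W"
  shows "\<exists>(r::nat) Y. (\<forall>i<r. Y i \<in> W) \<and> lin_indep_rows R P {..<r} Y \<and> S \<subseteq> span_rows R P {..<r} Y"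
  using S
proof (induction S rule: finite_induct)
  case empty
  show ?case
    by (rule exI[where x = 0]) (simp add: lin_indep_rows_def)
next
  case (insert x S)
  then obtain r :: nat and Y where Y: "\<forall>i<r. Y i \<in> W" "lin_indep_rows R P {..<r} Y"
    and S_span: "S \<subseteq> span_rows R P {..<r} Y"
    by auto
  have WV: "W \<subseteq> vecs R P" using W unfolding lin_code_def by (rule conjunct1)
  have x: "x \<in> vecs R P" using insert.prems WV by auto
  have YV: "\<forall>i<r. Y i \<in> vecs R P" using Y(1) WV by auto
  show ?case
  proof (cases "x \<in> span_rows R P {..<r} Y")
    case True
    then show ?thesis using Y S_span by blast
  next
    case False
    have "\<forall>i<Suc r. (Y(r := x)) i \<in> W"
      using Y(1) insert.prems by auto
    moreover have "lin_indep_rows R P {..<Suc r} (Y(r := x))"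
      using lin_indep_rows_extend[OF Y(2) YV x False] .
    moreover have "insert x S \<subseteq> span_rows R P {..<Suc r} (Y(r := x))"
      using S_span span_rows_subset_fun_upd[OF YV x] fun_upd_in_span_rows[OF YV x] by blast
    ultimately show ?thesis by blast
  qed
qed

lemma exists_orthogonal_nonzero:
  assumes fin: "finite (carrier R)" "finite P"
    and Z: "finite Z" "Z \<subseteq> vecs R P" "card Z < card P"
  shows "\<exists>e\<in>vecs R P. e \<noteq> (\<lambda>_. \<zero>) \<and> (\<forall>z\<in>Z. (\<Oplus> p\<in>P. e p \<otimes> z p) = \<zero>)"
proof -
  define D where "D d = restrict (\<lambda>z. \<Oplus> p\<in>P. d p \<otimes> z p) Z" for d
  have "D ` vecs R P \<subseteq> Z \<rightarrow>\<^sub>E carrier R"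
    using Z(2) unfolding D_def by (auto intro!: finsum_closed simp: vecs_closed subset_iff)
  moreover have "card (Z \<rightarrow>\<^sub>E carrier R) < card (vecs R P)"
    using Z fin card_carrier_ge_2[OF fin(1)]
    by (simp add: card_PiE card_vecs power_strict_increasing)
  ultimately have "\<not> inj_on D (vecs R P)"
    using card_inj_on_le[of D "vecs R P" "Z \<rightarrow>\<^sub>E carrier R"] Z(1) fin(1)
    by (meson finite_PiE leD)
  then obtain d d' where d: "d \<in> vecs R P" "d' \<in> vecs R P" "d \<noteq> d'" "D d = D d'"
    unfolding inj_on_def by blast
  define e where "e p = d p \<ominus> d' p" for p
  have "e \<in> vecs R P"
    using d(1,2) unfolding e_def vecs_def by auto
  moreover have "e \<noteq> (\<lambda>_. \<zero>)"
  proof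
    assume "e = (\<lambda>_. \<zero>)"
    then have "d p \<ominus> d' p = \<zero>" for p
      unfolding e_def by (rule fun_cong)
    then have "d p = d' p" for p
      using r_right_minus_eq[OF vecs_closed[OF d(1)] vecs_closed[OF d(2)]] by simp
    then show False using d(3) by blast
  qed
  moreover have "(\<Oplus> p\<in>P. e p \<otimes> z p) = \<zero>" if "z \<in> Z" for z
  proof -
    have "(\<Oplus> p\<in>P. d p \<otimes> z p) = (\<Oplus> p\<in>P. d' p \<otimes> z p)"
      using fun_cong[OF d(4), of z] that unfolding D_def by simp
    moreover have "z \<in> vecs R P" using that Z(2) by blast
    ultimately show ?thesis
      unfolding e_def using d(1,2)
      by (simp add: finsum_diff_ldistr vecs_closed)
  qed
  ultimately show ?thesis by blast
qed

lemma exists_short_spanning: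
  assumes fin: "finite (carrier R)" "finite P"
    and W: "lin_code R P W" "card W \<le> card (carrier R) ^ r" and S: "finite S" "S \<subseteq> W"
  shows "\<exists>s\<le>r. \<exists>Y. (\<forall>i<s. Y i \<in> W) \<and> S \<subseteq> span_rows R P {..<s} Y"
proof -
  obtain s :: nat and Y where Y: "\<forall>i<s. Y i \<in> W" "lin_indep_rows R P {..<s} Y"
    and S_span: "S \<subseteq> span_rows R P {..<s} Y"
    using exists_independent_spanning[OF W(1) S] by blast
  have WV: "W \<subseteq> vecs R P" using W(1) unfolding lin_code_def by (rule conjunct1)
  have "card (vecs R P) > 0"
    using card_vecs[OF fin(2)] card_carrier_ge_2[OF fin(1)] by simp
  then have "finite W"
    using finite_subset[OF WV] card_ge_0_finite by blast
  have "\<forall>i\<in>{..<s}. \<forall>p\<in>P. Y i p \<in> carrier R"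
    using Y(1) WV by (meson lessThan_iff subsetD vecs_closed)
  then have "card (carrier R) ^ s = card (span_rows R P {..<s} Y)"
    using card_span_rows[OF _ Y(2)] by simp
  also have "\<dots> \<le> card W"
    using span_rows_subset[OF W(1)] Y(1) \<open>finite W\<close> by (intro card_mono) auto
  finally have "card (carrier R) ^ s \<le> card (carrier R) ^ r"
    using W(2) by (rule order.trans)
  then have "s \<le> r"
    by (rule power_le_imp_le_exp[rotated]) (use card_carrier_ge_2[OF fin(1)] in simp)
  then show ?thesis
    using Y(1) S_span by blast
qed

lemma exists_orthogonal_to_small_subspace:
  assumes fin: "finite (carrier R)" "finite P"
    and W: "lin_code R P W" "card W \<le> card (carrier R) ^ r"
    and S: "finite S" "S \<subseteq> W"
    and Z: "finite Z" "Z \<subseteq> vecs R P" "r + card Z < card P"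
  shows "\<exists>e\<in>vecs R P. e \<noteq> (\<lambda>_. \<zero>) \<and> (\<forall>z\<in>S \<union> Z. (\<Oplus> p\<in>P. e p \<otimes> z p) = \<zero>)"
proof -
  obtain s Y where "s \<le> r" and Y: "\<forall>i<s. Y i \<in> W" and S_span: "S \<subseteq> span_rows R P {..<s} Y"
    using exists_short_spanning[OF fin W S] by blast
  have WV: "W \<subseteq> vecs R P" using W(1) unfolding lin_code_def by (rule conjunct1)
  define Z' where "Z' = Y ` {..<s} \<union> Z"
  have "card Z' \<le> s + card Z"
    unfolding Z'_def using card_Un_le[of "Y ` {..<s}" Z] card_image_le[of "{..<s}" Y] by simp
  moreover have "Z' \<subseteq> vecs R P" "finite Z'"
    unfolding Z'_def using Y WV Z by auto
  ultimately obtain e where e: "e \<in> vecs R P" "e \<noteq> (\<lambda>_. \<zero>)"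
    and e_orth: "\<forall>z\<in>Z'. (\<Oplus> p\<in>P. e p \<otimes> z p) = \<zero>"
    using exists_orthogonal_nonzero[OF fin, of Z'] \<open>s \<le> r\<close> Z(3) by auto
  have "span_rows R P {..<s} Y \<subseteq> {v \<in> vecs R P. (\<Oplus> p\<in>P. e p \<otimes> v p) = \<zero>}"
    using e_orth Y WV unfolding Z'_def
    by (intro span_rows_subset lin_code_orthogonal fin e) auto
  then show ?thesis
    using e e_orth S_span unfolding Z'_def by blast
qed

end

context ring
begin

lemma corrects_span_rowsI:
  assumes M: "\<forall>i\<in>I. \<forall>p\<in>grid m n. M i p \<in> carrier R"
    and indep: "lin_indep_rows R (grid m n - E) I M"
  shows "corrects m n (span_rows R (grid m n) I M) E"
  unfolding corrects_def
proof (intro ballI impI)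
  fix x y assume "x \<in> span_rows R (grid m n) I M" "y \<in> span_rows R (grid m n) I M"
    and agree: "\<forall>p\<in>grid m n - E. x p = y p"
  then obtain c d where c: "\<forall>i\<in>I. c i \<in> carrier R" "\<forall>i\<in>I. d i \<in> carrier R"
    and x: "x = (\<lambda>p. if p \<in> grid m n then (\<Oplus> i\<in>I. c i \<otimes> M i p) else \<zero>)"
    and y: "y = (\<lambda>p. if p \<in> grid m n then (\<Oplus> i\<in>I. d i \<otimes> M i p) else \<zero>)"
    unfolding span_rows_def by blast
  have vanish: "\<forall>p\<in>grid m n - E. (\<Oplus> i\<in>I. (c i \<ominus> d i) \<otimes> M i p) = \<zero>"
  proof
    fix p assume "p \<in> grid m n - E"
    then have "(\<Oplus> i\<in>I. c i \<otimes> M i p) = (\<Oplus> i\<in>I. d i \<otimes> M i p)"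
      using agree unfolding x y by auto
    moreover have "c \<in> I \<rightarrow> carrier R" "d \<in> I \<rightarrow> carrier R" "(\<lambda>i. M i p) \<in> I \<rightarrow> carrier R"
      using c M \<open>p \<in> grid m n - E\<close> by auto
    moreover have "(\<Oplus> i\<in>I. d i \<otimes> M i p) \<in> carrier R"
      using c M \<open>p \<in> grid m n - E\<close> by (intro finsum_closed) auto
    ultimately show "(\<Oplus> i\<in>I. (c i \<ominus> d i) \<otimes> M i p) = \<zero>"
      by (simp add: finsum_diff_ldistr)
  qed
  moreover have "\<forall>i\<in>I. c i \<ominus> d i \<in> carrier R"
    using c by simp
  moreover have "(\<forall>i\<in>I. c i \<ominus> d i \<in> carrier R) \<longrightarrow>
      (\<forall>p\<in>grid m n - E. (\<Oplus> i\<in>I. (c i \<ominus> d i) \<otimes> M i p) = \<zero>) \<longrightarrow> (\<forall>i\<in>I. c i \<ominus> d i = \<zero>)"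
    by (rule indep[unfolded lin_indep_rows_def, THEN spec[where x = "\<lambda>i. c i \<ominus> d i"]])
  ultimately have "\<forall>i\<in>I. c i \<ominus> d i = \<zero>"
    by blast
  then have "c i = d i" if "i \<in> I" for i
    using that c by simp
  then have "(\<Oplus> i\<in>I. c i \<otimes> M i p) = (\<Oplus> i\<in>I. d i \<otimes> M i p)" if "p \<in> grid m n" for p
    using that c M by (intro finsum_cong') auto
  then show "x = y"
    unfolding x y by (simp add: fun_eq_iff)
qed

lemma corrects_span_rowsD:
  assumes corr: "corrects m n (span_rows R (grid m n) I M) E"
    and indep: "lin_indep_rows R (grid m n) I M"
    and M: "\<forall>i\<in>I. \<forall>p\<in>grid m n. M i p \<in> carrier R"
  shows "lin_indep_rows R (grid m n - E) I M"
  unfolding lin_indep_rows_def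
proof (intro allI impI)
  fix c assume c: "\<forall>i\<in>I. c i \<in> carrier R"
    and vanish: "\<forall>p\<in>grid m n - E. (\<Oplus> i\<in>I. c i \<otimes> M i p) = \<zero>"
  define x where "x = (\<lambda>p. if p \<in> grid m n then (\<Oplus> i\<in>I. c i \<otimes> M i p) else \<zero>)"
  have zero_comb: "(\<Oplus> i\<in>I. \<zero> \<otimes> M i p) = \<zero>" if "p \<in> grid m n" for p
  proof -
    have "(\<Oplus> i\<in>I. \<zero> \<otimes> M i p) = (\<Oplus> i\<in>I. \<zero>)"
      using M that by (intro finsum_cong') auto
    then show ?thesis by simp
  qed
  have "x \<in> span_rows R (grid m n) I M"
    unfolding x_def span_rows_def using c by blast
  moreover have "(\<lambda>_. \<zero>) \<in> span_rows R (grid m n) I M"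
    unfolding span_rows_def using zero_comb by (auto intro!: exI[of _ "\<lambda>_. \<zero>"])
  ultimately have "x = (\<lambda>_. \<zero>)"
    using corr vanish unfolding corrects_def x_def by auto
  then have "\<forall>p\<in>grid m n. (\<Oplus> i\<in>I. c i \<otimes> M i p) = \<zero>"
    unfolding x_def by (metis (mono_tags))
  then show "\<forall>i\<in>I. c i = \<zero>"
    using indep c unfolding lin_indep_rows_def by blast
qed

end

definition linearized :: "('a, 'm) ring_scheme \<Rightarrow> nat \<Rightarrow> (nat \<Rightarrow> 'a) \<Rightarrow> nat \<Rightarrow> 'a \<Rightarrow> 'a" where
  "linearized R q c k x = (\<Oplus>\<^bsub>R\<^esub> i\<in>{1..k}. c i \<otimes>\<^bsub>R\<^esub> x [^]\<^bsub>R\<^esub> (q ^ (i - 1)))"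

lemma nat_pow_carrier_update: "x [^]\<^bsub>R\<lparr>carrier := K\<rparr>\<^esub> (n::nat) = x [^]\<^bsub>R\<^esub> n"
  by (simp add: nat_pow_def)

lemma add_pow_carrier_update: "add_pow (R\<lparr>carrier := K\<rparr>) (n::nat) x = add_pow R n x"
  by (simp add: add_pow_def nat_pow_def)

locale finite_subfield = field L for L (structure) +
  fixes K :: "'a set" and q :: nat
  assumes subfield: "subfield K L" and card_K: "card K = q"
    and prime_power: "\<exists>p k. Factorial_Ring.prime (p::nat) \<and> k > 0 \<and> q = p ^ k"
begin

lemma field_K: "field (L\<lparr>carrier := K\<rparr>)"
  using subfield_iff(2)[OF subfield] .

lemma subring_K: "subring K L"
  using subfieldE(1)[OF subfield] .

lemma K_subset: "K \<subseteq> carrier L"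
  using subfieldE(3)[OF subfield] .

lemma finite_K: "finite K"
  using prime_power card_K by (metis card.infinite prime_gt_0_nat zero_less_power less_irrefl)

lemma q_gt_1: "q > 1"
  using field.card_carrier_ge_2[OF field_K] finite_K card_K by simp

lemma pow_q_eq_self:
  assumes "\<alpha> \<in> K" shows "\<alpha> [^] q = \<alpha>"
  using field.pow_order_eq_self[OF field_K, of \<alpha>] assms finite_K card_K
  by (simp add: order_def nat_pow_carrier_update)

lemma pow_q_power_eq_self:
  assumes \<alpha>: "\<alpha> \<in> K" shows "\<alpha> [^] (q ^ e) = \<alpha>"
proof (induction e)
  case (Suc e)
  have "\<alpha> \<in> carrier L" using \<alpha> K_subset by blast
  then show ?case
    using Suc pow_q_eq_self[OF \<alpha>] by (metis nat_pow_pow power_Suc2)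
qed (use \<alpha> K_subset in auto)

lemma characteristic:
  obtains p e where "Factorial_Ring.prime (p::nat)" "q = p ^ e" "add_pow L p \<one> = \<zero>"
proof -
  obtain p e where p: "Factorial_Ring.prime (p::nat)" "q = p ^ e"
    using prime_power by blast
  interpret K: field "L\<lparr>carrier := K\<rparr>" by (rule field_K)
  have "add_pow L q \<one> = \<zero>"
    using K.add.pow_order_eq_1[OF K.one_closed] card_K
    by (simp add: order_def add_pow_carrier_update)
  then show ?thesis
    using that p add_pow_one_eq_zero_of_power by blast
qed

lemma frobenius_q_power_add:
  assumes "x \<in> carrier L" "y \<in> carrier L"
  shows "(x \<oplus> y) [^] (q ^ e) = x [^] (q ^ e) \<oplus> y [^] (q ^ e)"
proof -
  obtain p k where p: "Factorial_Ring.prime (p::nat)" "q = p ^ k" "add_pow L p \<one> = \<zero>"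
    using characteristic .
  then show ?thesis
    using frobenius_power_add[OF p(1) p(3) assms, of "k * e"] by (simp add: power_mult)
qed

lemma frobenius_q_power_smult:
  assumes "\<alpha> \<in> K" "x \<in> carrier L"
  shows "(\<alpha> \<otimes> x) [^] (q ^ e) = \<alpha> \<otimes> x [^] (q ^ e)"
  using assms K_subset pow_q_power_eq_self by (simp add: nat_pow_distrib subset_iff)

lemma frobenius_q_power_lincomb:
  assumes "finite A" "u \<in> A \<rightarrow> K" "g \<in> A \<rightarrow> carrier L"
  shows "(\<Oplus> j\<in>A. u j \<otimes> g j) [^] (q ^ e) = (\<Oplus> j\<in>A. u j \<otimes> g j [^] (q ^ e))"
  using assms
proof (induction A rule: finite_induct)
  case empty
  then show ?case using q_gt_1 by (simp add: nat_pow_zero)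
next
  case (insert a A)
  then have "u a \<in> K" "u a \<in> carrier L" "g a \<in> carrier L" "u \<in> A \<rightarrow> carrier L"
    using K_subset by auto
  with insert show ?case
    by (simp add: frobenius_q_power_add frobenius_q_power_smult Pi_iff)
qed

lemma linearized_add:
  assumes c: "c \<in> {1..k} \<rightarrow> carrier L" and x: "x \<in> carrier L" and y: "y \<in> carrier L"
  shows "linearized L q c k (x \<oplus> y) = linearized L q c k x \<oplus> linearized L q c k y"
proof -
  have "linearized L q c k (x \<oplus> y) =
      (\<Oplus> i\<in>{1..k}. c i \<otimes> x [^] (q ^ (i - 1)) \<oplus> c i \<otimes> y [^] (q ^ (i - 1)))"
    unfolding linearized_def using c x y
    by (intro finsum_cong') (auto simp: frobenius_q_power_add r_distr Pi_iff)
  also have "\<dots> = linearized L q c k x \<oplus> linearized L q c k y"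
    unfolding linearized_def using c x y by (intro finsum_addf) auto
  finally show ?thesis .
qed

lemma linearized_smult:
  assumes c: "c \<in> {1..k} \<rightarrow> carrier L" and \<alpha>: "\<alpha> \<in> K" and x: "x \<in> carrier L"
  shows "linearized L q c k (\<alpha> \<otimes> x) = \<alpha> \<otimes> linearized L q c k x"
proof -
  have "\<alpha> \<in> carrier L" using \<alpha> K_subset by blast
  have "linearized L q c k (\<alpha> \<otimes> x) = (\<Oplus> i\<in>{1..k}. \<alpha> \<otimes> (c i \<otimes> x [^] (q ^ (i - 1))))"
    unfolding linearized_def using c \<alpha> x \<open>\<alpha> \<in> carrier L\<close>
    by (intro finsum_cong') (auto simp: frobenius_q_power_smult m_lcomm Pi_iff)
  also have "\<dots> = \<alpha> \<otimes> linearized L q c k x"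
    unfolding linearized_def using c x \<open>\<alpha> \<in> carrier L\<close> by (intro finsum_rdistr[symmetric]) auto
  finally show ?thesis .
qed

lemma card_roots_linearized_le:
  assumes "finite (carrier L)" "c \<in> {1..k} \<rightarrow> carrier L" "i \<in> {1..k}" "c i \<noteq> \<zero>"
  shows "card {x \<in> carrier L. linearized L q c k x = \<zero>} \<le> q ^ (k - 1)"
proof -
  have "inj_on (\<lambda>i. q ^ (i - 1)) {1..k}"
    using q_gt_1 by (auto simp: inj_on_def)
  moreover have "Max ((\<lambda>i. q ^ (i - 1)) ` {1..k}) \<le> q ^ (k - 1)"
    using q_gt_1 assms(3) by (auto intro: power_increasing)
  ultimately show ?thesis
    using card_roots_sparse_poly_le[OF assms(1) _ _ assms(2-4)] unfolding linearized_def
    by (meson finite_atLeastAtMost le_trans)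
qed

lemma mat_mult_gab_gen:
  assumes g: "\<forall>j\<in>{1..N}. g j \<in> carrier L" and G: "\<forall>j\<in>{1..N}. G j p \<in> K"
  shows "mat_mult L {1..N} (gab_gen L q g) G i p = (\<Oplus> j\<in>{1..N}. G j p \<otimes> g j) [^] (q ^ (i - 1))"
proof -
  have "(\<Oplus> j\<in>{1..N}. G j p \<otimes> g j) [^] (q ^ (i - 1)) = (\<Oplus> j\<in>{1..N}. G j p \<otimes> g j [^] (q ^ (i - 1)))"
    using g G by (intro frobenius_q_power_lincomb) auto
  also have "\<dots> = mat_mult L {1..N} (gab_gen L q g) G i p"
    unfolding mat_mult_def gab_gen_def using g G K_subset
    by (intro finsum_cong') (auto simp: m_comm subset_iff)
  finally show ?thesis by simp
qed

lemma lin_code_linearized_kernel: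
  fixes N :: nat
  assumes g: "\<forall>j\<in>{1..N}. g j \<in> carrier L" and c: "c \<in> {1..k} \<rightarrow> carrier L"
  shows "lin_code (L\<lparr>carrier := K\<rparr>) {1..N}
      {u \<in> vecs (L\<lparr>carrier := K\<rparr>) {1..N}. linearized L q c k (\<Oplus> j\<in>{1..N}. u j \<otimes> g j) = \<zero>}"
    (is "lin_code ?K {1..N} {u \<in> ?V. ?f u = \<zero>}")
proof -
  interpret K: field ?K by (rule field_K)
  have V: "u j \<in> carrier L" if "u \<in> ?V" for u j
    using K.vecs_closed[OF that] K_subset by auto
  have \<phi>_closed: "(\<Oplus> j\<in>{1..N}. u j \<otimes> g j) \<in> carrier L" if "u \<in> ?V" for u
    using V[OF that] g by (auto intro!: finsum_closed)
  have add: "?f (\<lambda>j. u j \<oplus> v j) = ?f u \<oplus> ?f v" if "u \<in> ?V" "v \<in> ?V" for u v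
  proof -
    have "(\<Oplus> j\<in>{1..N}. (u j \<oplus> v j) \<otimes> g j) = (\<Oplus> j\<in>{1..N}. u j \<otimes> g j \<oplus> v j \<otimes> g j)"
      using that V g by (intro finsum_cong') (auto simp: l_distr)
    also have "\<dots> = (\<Oplus> j\<in>{1..N}. u j \<otimes> g j) \<oplus> (\<Oplus> j\<in>{1..N}. v j \<otimes> g j)"
      using that V g by (intro finsum_addf) auto
    finally show ?thesis
      using linearized_add[OF c \<phi>_closed \<phi>_closed] that by simp
  qed
  have smult: "?f (\<lambda>j. \<alpha> \<otimes> u j) = \<alpha> \<otimes> ?f u" if "\<alpha> \<in> K" "u \<in> ?V" for \<alpha> u
  proof -
    have "\<alpha> \<in> carrier L" using that K_subset by auto
    then have "(\<Oplus> j\<in>{1..N}. (\<alpha> \<otimes> u j) \<otimes> g j) = \<alpha> \<otimes> (\<Oplus> j\<in>{1..N}. u j \<otimes> g j)"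
      using that V g by (subst finsum_rdistr) (auto simp: m_assoc intro!: finsum_cong')
    then show ?thesis
      using linearized_smult[OF c that(1) \<phi>_closed[OF that(2)]] by simp
  qed
  have zero: "?f (\<lambda>_. \<zero>) = \<zero>"
  proof -
    have "(\<Oplus> j\<in>{1..N}. \<zero> \<otimes> g j) = (\<Oplus> j\<in>{1..N}. \<zero>)"
      using g by (intro finsum_cong') auto
    moreover have "linearized L q c k \<one> \<in> carrier L"
      unfolding linearized_def using c by (auto intro!: finsum_closed)
    ultimately show ?thesis
      using linearized_smult[OF c subringE(2)[OF subring_K] one_closed] by simp
  qed
  have V_zero: "(\<lambda>_. \<zero>) \<in> ?V"
    and V_add: "u \<in> ?V \<Longrightarrow> v \<in> ?V \<Longrightarrow> (\<lambda>j. u j \<oplus> v j) \<in> ?V"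
    and V_smult: "\<alpha> \<in> K \<Longrightarrow> u \<in> ?V \<Longrightarrow> (\<lambda>j. \<alpha> \<otimes> u j) \<in> ?V" for u v \<alpha>
    using K.lin_code_vecs[of "{1..N}"] unfolding lin_code_def by auto
  show ?thesis
    unfolding lin_code_def
  proof (intro conjI ballI)
    fix u v assume "u \<in> {u \<in> ?V. ?f u = \<zero>}" "v \<in> {u \<in> ?V. ?f u = \<zero>}"
    then show "(\<lambda>j. u j \<oplus>\<^bsub>?K\<^esub> v j) \<in> {u \<in> ?V. ?f u = \<zero>}"
      using add[of u v] V_add[of u v] by simp
  next
    fix \<alpha> u assume "\<alpha> \<in> carrier ?K" "u \<in> {u \<in> ?V. ?f u = \<zero>}"
    then show "(\<lambda>j. \<alpha> \<otimes>\<^bsub>?K\<^esub> u j) \<in> {u \<in> ?V. ?f u = \<zero>}"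
      using smult[of \<alpha> u] V_smult[of \<alpha> u] K_subset by auto
  qed (use zero V_zero in auto)
qed

lemma card_linearized_kernel_le:
  fixes N :: nat
  assumes L_fin: "finite (carrier L)" and g: "\<forall>j\<in>{1..N}. g j \<in> carrier L"
    and g_indep: "\<forall>u. (\<forall>j\<in>{1..N}. u j \<in> K) \<longrightarrow> (\<Oplus> j\<in>{1..N}. u j \<otimes> g j) = \<zero> \<longrightarrow>
        (\<forall>j\<in>{1..N}. u j = \<zero>)"
    and c: "c \<in> {1..k} \<rightarrow> carrier L" "i \<in> {1..k}" "c i \<noteq> \<zero>"
  shows "card {u \<in> vecs (L\<lparr>carrier := K\<rparr>) {1..N}. linearized L q c k (\<Oplus> j\<in>{1..N}. u j \<otimes> g j) = \<zero>}
      \<le> q ^ (k - 1)"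
    (is "card {u \<in> ?V. ?f u = \<zero>} \<le> _")
proof -
  interpret K: field "L\<lparr>carrier := K\<rparr>" by (rule field_K)
  define \<phi> where "\<phi> u = (\<Oplus> j\<in>{1..N}. u j \<otimes> g j)" for u
  have V: "u j \<in> carrier L" if "u \<in> ?V" for u j
    using K.vecs_closed[OF that] K_subset by auto
  have inj: "inj_on \<phi> ?V"
  proof (rule inj_onI)
    fix u v assume u: "u \<in> ?V" and v: "v \<in> ?V" and "\<phi> u = \<phi> v"
    then have "(\<Oplus> j\<in>{1..N}. (u j \<ominus> v j) \<otimes> g j) = \<zero>"
      unfolding \<phi>_def using V g by (subst finsum_diff_ldistr) (auto intro!: finsum_closed)
    moreover have "u j \<ominus> v j \<in> K" for j
      using K.vecs_closed[OF u] K.vecs_closed[OF v] subringE(5,7)[OF subring_K]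
      by (simp add: a_minus_def)
    ultimately have "u j \<ominus> v j = \<zero>" if "j \<in> {1..N}" for j
      using g_indep[rule_format, of "\<lambda>j. u j \<ominus> v j"] that by blast
    then have "u j = v j" if "j \<in> {1..N}" for j
      using that V u v by simp
    moreover have "u j = v j" if "j \<notin> {1..N}" for j
      using that u v unfolding vecs_def by simp
    ultimately show "u = v" by blast
  qed
  have "inj_on \<phi> {u \<in> ?V. ?f u = \<zero>}"
    by (rule inj_on_subset[OF inj]) (rule Collect_subset)
  then have "card {u \<in> ?V. ?f u = \<zero>} = card (\<phi> ` {u \<in> ?V. ?f u = \<zero>})"
    by (rule card_image[symmetric])
  also have "\<dots> \<le> card {x \<in> carrier L. linearized L q c k x = \<zero>}"
    unfolding \<phi>_def using L_fin V g by (intro card_mono) (auto intro!: finsum_closed)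
  also have "\<dots> \<le> q ^ (k - 1)"
    by (rule card_roots_linearized_le[OF L_fin c])
  finally show ?thesis .
qed

lemma lin_indep_rows_gab_gen_mult:
  fixes G :: "nat \<Rightarrow> 'p \<Rightarrow> 'a" and N k :: nat
  assumes L_fin: "finite (carrier L)" and g: "\<forall>j\<in>{1..N}. g j \<in> carrier L"
    and g_indep: "\<forall>u. (\<forall>j\<in>{1..N}. u j \<in> K) \<longrightarrow> (\<Oplus> j\<in>{1..N}. u j \<otimes> g j) = \<zero> \<longrightarrow>
        (\<forall>j\<in>{1..N}. u j = \<zero>)"
    and G_K: "\<forall>j\<in>{1..N}. \<forall>p\<in>T. G j p \<in> K"
    and G_indep: "lin_indep_rows (L\<lparr>carrier := K\<rparr>) T {1..N} G"
    and T: "finite T" and J: "J \<subseteq> T" "k + card J \<le> N"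
  shows "lin_indep_rows L (T - J) {1..k} (mat_mult L {1..N} (gab_gen L q g) G)"
  unfolding lin_indep_rows_def
proof (intro allI impI ballI, rule ccontr)
  fix c i0 assume c: "\<forall>i\<in>{1..k}. c i \<in> carrier L"
    and vanish: "\<forall>p\<in>T - J. (\<Oplus> i\<in>{1..k}. c i \<otimes> mat_mult L {1..N} (gab_gen L q g) G i p) = \<zero>"
    and i0: "i0 \<in> {1..k}" "c i0 \<noteq> \<zero>"
  interpret K: field "L\<lparr>carrier := K\<rparr>" by (rule field_K)
  define col where "col p = (\<lambda>j. if j \<in> {1..N} then G j p else \<zero>)" for p
  define U where "U = {u \<in> vecs (L\<lparr>carrier := K\<rparr>) {1..N}.
      linearized L q c k (\<Oplus> j\<in>{1..N}. u j \<otimes> g j) = \<zero>}"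
  have col_vecs: "col p \<in> vecs (L\<lparr>carrier := K\<rparr>) {1..N}" if "p \<in> T" for p
    using G_K that unfolding col_def vecs_def by auto
  have "col p \<in> U" if "p \<in> T - J" for p
  proof -
    have "(\<Oplus> j\<in>{1..N}. G j p \<otimes> g j) = (\<Oplus> j\<in>{1..N}. col p j \<otimes> g j)"
      unfolding col_def using G_K g K_subset that by (intro finsum_cong') (auto simp: subset_iff)
    then have "mat_mult L {1..N} (gab_gen L q g) G i p = (\<Oplus> j\<in>{1..N}. col p j \<otimes> g j) [^] (q ^ (i - 1))" for i
      using mat_mult_gab_gen[OF g, of G p i] G_K that by simp
    then show ?thesis
      using vanish[rule_format, OF that] that col_vecs unfolding U_def linearized_def by auto
  qed
  moreover have "lin_code (L\<lparr>carrier := K\<rparr>) {1..N} U"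
    unfolding U_def using g c by (intro lin_code_linearized_kernel) auto
  moreover have "card U \<le> card (carrier (L\<lparr>carrier := K\<rparr>)) ^ (k - 1)"
    unfolding U_def using card_linearized_kernel_le[OF L_fin g g_indep, of c k i0] i0 c card_K by auto
  \<comment> \<open>U has dimension at most k - 1, so U and the columns indexed by J span less than K^N.\<close>
  moreover have "k - 1 + card (col ` J) < card {1..N}"
    using i0 J card_image_le[of J col] finite_subset[OF J(1) T] by auto
  ultimately obtain e where e: "e \<in> vecs (L\<lparr>carrier := K\<rparr>) {1..N}" "e \<noteq> (\<lambda>_. \<zero>)"
    and e_orth: "\<forall>z\<in>col ` (T - J) \<union> col ` J. finsum (L\<lparr>carrier := K\<rparr>) (\<lambda>j. e j \<otimes> z j) {1..N} = \<zero>"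
    using K.exists_orthogonal_to_small_subspace[of "{1..N}" U "k - 1" "col ` (T - J)" "col ` J"]
      finite_K T J(1) col_vecs finite_subset[OF J(1) T] by (auto simp: image_subset_iff)
  have "finsum (L\<lparr>carrier := K\<rparr>) (\<lambda>j. e j \<otimes> G j p) {1..N} = \<zero>" if "p \<in> T" for p
  proof -
    have "finsum (L\<lparr>carrier := K\<rparr>) (\<lambda>j. e j \<otimes> G j p) {1..N}
        = finsum (L\<lparr>carrier := K\<rparr>) (\<lambda>j. e j \<otimes> col p j) {1..N}"
      using K.vecs_closed[OF e(1)] G_K that unfolding col_def
      by (intro K.finsum_cong') (auto intro!: subringE(6)[OF subring_K])
    then show ?thesis using e_orth that by auto
  qed
  then have "\<forall>j\<in>{1..N}. e j = \<zero>"
    using G_indep K.vecs_closed[OF e(1)] unfolding lin_indep_rows_def by simp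
  then have "e = (\<lambda>_. \<zero>)"
    using e(1) unfolding vecs_def by (auto simp: fun_eq_iff)
  then show False
    using e(2) by contradiction
qed

end

theorem theorem1:
  fixes L :: "'a ring" and K :: "'a set"
    and q s m n a b h :: nat
    and Cout :: "(nat \<times> nat \<Rightarrow> 'a) set"
    and Gout :: "nat \<Rightarrow> nat \<times> nat \<Rightarrow> 'a"
    and g :: "nat \<Rightarrow> 'a"
  assumes q_pp: "\<exists>p k. Factorial_Ring.prime (p::nat) \<and> k > 0 \<and> q = p ^ k"
    and L_field: "field L" and L_fin: "finite (carrier L)" and L_card: "card (carrier L) = q ^ s"
    and K_sub: "subfield K L" and K_card: "card K = q"
    and ma: "m > a" and nb: "n > b"
    and h_le: "h \<le> (m - a) * (n - b) - max (m - a) (n - b)"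
    and Gout_K: "\<forall>i\<in>{1..(m - a) * (n - b)}. \<forall>p\<in>grid m n. Gout i p \<in> K"
    and Gout_indep: "lin_indep_rows (L\<lparr>carrier := K\<rparr>) (grid m n) {1..(m - a) * (n - b)} Gout"
    and Cout_def: "Cout = span_rows (L\<lparr>carrier := K\<rparr>) (grid m n) {1..(m - a) * (n - b)} Gout"
    and Cout_MR: "MR_code (L\<lparr>carrier := K\<rparr>) m n a b 0 Cout"
    and s_ge: "s \<ge> (m - a) * (n - b)"
    and g_L: "\<forall>j\<in>{1..(m - a) * (n - b)}. g j \<in> carrier L"
    and g_indep: "\<forall>c. (\<forall>j\<in>{1..(m - a) * (n - b)}. c j \<in> K) \<longrightarrow>
        (\<Oplus>\<^bsub>L\<^esub> j\<in>{1..(m - a) * (n - b)}. c j \<otimes>\<^bsub>L\<^esub> g j) = \<zero>\<^bsub>L\<^esub> \<longrightarrow>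
        (\<forall>j\<in>{1..(m - a) * (n - b)}. c j = \<zero>\<^bsub>L\<^esub>)"
  shows "\<forall>E' I. max_correctable m n a b 0 E' \<longrightarrow> I \<subseteq> grid m n - E' \<longrightarrow> card I = h \<longrightarrow>
     corrects m n
       (span_rows L (grid m n) {1..(m - a) * (n - b) - h}
          (mat_mult L {1..(m - a) * (n - b)} (gab_gen L q g) Gout))
       (E' \<union> I)"
proof (intro allI impI)
  fix E' I assume max: "max_correctable m n a b 0 E'" and I: "I \<subseteq> grid m n - E'" "card I = h"
  define N where "N = (m - a) * (n - b)"
  interpret finite_subfield L K q
    using L_field K_sub K_card q_pp by (simp add: finite_subfield_def finite_subfield_axioms_def)
  interpret K: field "L\<lparr>carrier := K\<rparr>" by (rule field_K)
  have "corrects m n Cout E'"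
    using max Cout_MR unfolding max_correctable_def MR_code_def by blast
  then have "lin_indep_rows (L\<lparr>carrier := K\<rparr>) (grid m n - E') {1..N} Gout"
    using Gout_indep Gout_K unfolding Cout_def N_def by (intro K.corrects_span_rowsD) auto
  then have "lin_indep_rows L (grid m n - E' - I) {1..N - h} (mat_mult L {1..N} (gab_gen L q g) Gout)"
    using g_L g_indep Gout_K I h_le unfolding N_def
    by (intro lin_indep_rows_gab_gen_mult[OF L_fin]) (auto simp: grid_def)
  moreover have "grid m n - E' - I = grid m n - (E' \<union> I)" by blast
  moreover have "\<forall>i\<in>{1..N - h}. \<forall>p\<in>grid m n. mat_mult L {1..N} (gab_gen L q g) Gout i p \<in> carrier L"
    using g_L Gout_K K_subset unfolding mat_mult_def gab_gen_def N_def
    by (auto intro!: finsum_closed simp: subset_iff)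
  ultimately show "corrects m n (span_rows L (grid m n) {1..(m - a) * (n - b) - h}
      (mat_mult L {1..(m - a) * (n - b)} (gab_gen L q g) Gout)) (E' \<union> I)"
    unfolding N_def by (metis corrects_span_rowsI)
qed

end
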